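(* Let $A,B\in\mathbb{P}_d$ and let $X\in\mathbb{C}^{d\times k}$ have full column rank. Then for every $t\in[0,1]$, $$\operatorname{tr} X^*(A\#_tB)X\le[\operatorname{tr}X^*AX]^{1-t}[\operatorname{tr}X^*BX]^{t}.$$
   Context: $\mathbb{P}_d$ denotes the set of $d\times d$ Hermitian positive definite matrices, and $A\#_tB:=A^{1/2}(A^{-1/2}BA^{-1/2})^tA^{1/2}$ for $A,B\in\mathbb{P}_d$, $t\in[0,1]$. *)

theory Defs
  imports "HOL-Analysis.Analysis"
begin

definition cadj :: "complex^'n^'m \<Rightarrow> complex^'m^'n" where
  "cadj M = (\<chi> i j. cnj (M $ j $ i))"

definition hermitian :: "complex^'n^'n \<Rightarrow> bool" where
  "hermitian M \<longleftrightarrow> cadj M = M"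

definition posdef :: "complex^'n^'n \<Rightarrow> bool" where
  "posdef M \<longleftrightarrow> hermitian M \<and>
     (\<forall>x::complex^'n. x \<noteq> 0 \<longrightarrow> 0 < Re (\<Sum>i\<in>UNIV. cnj (x $ i) * (M *v x) $ i))"

definition unitary :: "complex^'n^'n \<Rightarrow> bool" where
  "unitary U \<longleftrightarrow> cadj U ** U = mat 1"

definition rdiag :: "('n \<Rightarrow> real) \<Rightarrow> complex^'n^'n" where
  "rdiag d = (\<chi> i j. if i = j then complex_of_real (d i) else 0)"

text \<open>Real power of a positive definite matrix via spectral decomposition
  M = U diag(lambda) U*, M^t = U diag(lambda^t) U* (independent of the choice).\<close>
definition mpowr :: "complex^'n^'n \<Rightarrow> real \<Rightarrow> complex^'n^'n" where
  "mpowr M t = (SOME P. \<exists>U d. unitary U \<and> (\<forall>i. 0 < d i) \<and>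
       M = U ** rdiag d ** cadj U \<and> P = U ** rdiag (\<lambda>i. d i powr t) ** cadj U)"

definition gmean :: "complex^'n^'n \<Rightarrow> real \<Rightarrow> complex^'n^'n \<Rightarrow> complex^'n^'n" where
  "gmean A t B = mpowr A (1/2) ** mpowr (mpowr A (-1/2) ** B ** mpowr A (-1/2)) t ** mpowr A (1/2)"

end

theory Submission
  imports Defs
begin

text \<open>Let \<open>S = A\<^bsup>1/2\<^esup>\<close> and diagonalise \<open>A\<^bsup>-1/2\<^esup> B A\<^bsup>-1/2\<^esup> = V diag(c) V\<^sup>*\<close> with \<open>V\<close> unitary.
  Then \<open>A\<close>, \<open>B\<close> and \<open>A #\<^sub>t B\<close> are \<open>S V diag(c\<^sup>s) V\<^sup>* S\<close> for \<open>s = 0, 1, t\<close>, so with \<open>Y = V\<^sup>* S X\<close>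
  the three traces are \<open>\<Sum>\<^sub>i c\<^sub>i\<^sup>s w\<^sub>i\<close> with weights \<open>w\<^sub>i = \<Sum>\<^sub>j |Y\<^sub>i\<^sub>j|\<^sup>2 \<ge> 0\<close>. The claim
  is then H\<ouml>lder's inequality \<open>\<Sum> c\<^sub>i\<^sup>t w\<^sub>i \<le> (\<Sum> w\<^sub>i)\<^bsup>1-t\<^esup> (\<Sum> c\<^sub>i w\<^sub>i)\<^sup>t\<close>. The spectral theorem
  for Hermitian matrices needed along the way is proved by maximising the quadratic form on the
  unit sphere of successive orthogonal complements.\<close>

lemma cadj_cadj [simp]: "cadj (cadj M) = M"
  by (simp add: cadj_def vec_eq_iff)

lemma cadj_mult: "cadj (A ** B) = cadj B ** cadj A"
  by (simp add: cadj_def vec_eq_iff matrix_matrix_mult_def mult.commute)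

lemma cadj_rdiag [simp]: "cadj (rdiag f) = rdiag f"
  by (simp add: cadj_def rdiag_def vec_eq_iff)

lemma rdiag_mult_left: "(rdiag f ** M) $ i $ j = complex_of_real (f i) * M $ i $ j"
  by (simp add: rdiag_def matrix_matrix_mult_def if_distrib if_distribR cong: if_cong)

lemma rdiag_mult_right: "(M ** rdiag f) $ i $ j = M $ i $ j * complex_of_real (f j)"
  by (simp add: rdiag_def matrix_matrix_mult_def if_distrib if_distribR cong: if_cong)

lemma rdiag_mult_rdiag: "rdiag f ** rdiag g = rdiag (\<lambda>i. f i * g i)"
  by (simp add: vec_eq_iff rdiag_mult_left) (simp add: rdiag_def)

lemma rdiag_one: "rdiag (\<lambda>_. 1) = mat 1"
  by (simp add: rdiag_def mat_def vec_eq_iff)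

lemma unitary_mult_cadj: "unitary U \<Longrightarrow> U ** cadj U = mat 1"
  unfolding unitary_def using matrix_left_right_inverse by blast

lemma matrix_mul_right_inverse_cancel: "A ** B = mat 1 \<Longrightarrow> X ** A ** B = X"
  by (metis matrix_mul_assoc matrix_mul_rid)

lemma cadj_unitary_conj: "cadj (U ** rdiag f ** cadj U) = U ** rdiag f ** cadj U"
  by (simp add: cadj_mult matrix_mul_assoc)

lemma unitary_rdiag_mult:
  assumes "unitary U"
  shows "(U ** rdiag f ** cadj U) ** (U ** rdiag g ** cadj U) = U ** rdiag (\<lambda>i. f i * g i) ** cadj U"
proof -
  have "(U ** rdiag f ** cadj U) ** (U ** rdiag g ** cadj U)
      = U ** rdiag f ** (cadj U ** U) ** rdiag g ** cadj U"
    by (simp add: matrix_mul_assoc)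
  also have "\<dots> = U ** (rdiag f ** rdiag g) ** cadj U"
    using assms by (simp add: unitary_def matrix_mul_assoc)
  finally show ?thesis by (simp add: rdiag_mult_rdiag)
qed

text \<open>Makes \<open>mpowr\<close> independent of the chosen diagonalisation: \<open>cadj U ** V\<close>
  intertwines \<open>rdiag a\<close> and \<open>rdiag b\<close>, so its entry \<open>(i, j)\<close> vanishes unless \<open>a i = b j\<close>,
  and then it also intertwines \<open>rdiag (f \<circ> a)\<close> and \<open>rdiag (f \<circ> b)\<close>.\<close>
lemma unitary_rdiag_eq_map:
  assumes U: "unitary U" and V: "unitary V"
    and eq: "U ** rdiag a ** cadj U = V ** rdiag b ** cadj V"
  shows "U ** rdiag (\<lambda>i. f (a i)) ** cadj U = V ** rdiag (\<lambda>i. f (b i)) ** cadj V"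
proof -
  define W where "W = cadj U ** V"
  have "rdiag a ** W = cadj U ** (U ** rdiag a ** cadj U) ** V"
    using U by (simp add: W_def unitary_def matrix_mul_assoc)
  also have "\<dots> = W ** rdiag b"
    using V by (simp add: eq W_def unitary_def matrix_mul_assoc matrix_mul_right_inverse_cancel)
  finally have "rdiag a ** W = W ** rdiag b" .
  then have "W $ i $ j = 0 \<or> a i = b j" for i j
    by (metis rdiag_mult_left rdiag_mult_right mult.commute mult_cancel_left of_real_eq_iff)
  then have "complex_of_real (f (a i)) * W $ i $ j = W $ i $ j * complex_of_real (f (b j))" for i j
    by (metis mult.commute mult_zero_right)
  then have intertwine: "rdiag (\<lambda>i. f (a i)) ** W = W ** rdiag (\<lambda>i. f (b i))"
    by (simp add: vec_eq_iff rdiag_mult_left rdiag_mult_right)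
  have "U ** rdiag (\<lambda>i. f (a i)) ** cadj U = U ** (rdiag (\<lambda>i. f (a i)) ** W) ** cadj V"
    using V by (simp add: W_def matrix_mul_assoc matrix_mul_right_inverse_cancel unitary_mult_cadj)
  also have "\<dots> = (U ** cadj U) ** V ** rdiag (\<lambda>i. f (b i)) ** cadj V"
    unfolding intertwine by (simp add: W_def matrix_mul_assoc)
  also have "\<dots> = V ** rdiag (\<lambda>i. f (b i)) ** cadj V"
    using U by (simp add: unitary_mult_cadj)
  finally show ?thesis .
qed

definition cinner :: "complex^'n \<Rightarrow> complex^'n \<Rightarrow> complex" where
  "cinner x y = (\<Sum>i\<in>UNIV. cnj (x $ i) * y $ i)"

lemma cinner_commute: "cinner y x = cnj (cinner x y)"
  by (simp add: cinner_def mult.commute)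

lemma cinner_add_left [simp]: "cinner (x + y) z = cinner x z + cinner y z"
  by (simp add: cinner_def distrib_right sum.distrib)

lemma cinner_add_right [simp]: "cinner x (y + z) = cinner x y + cinner x z"
  by (simp add: cinner_def distrib_left sum.distrib)

lemma cinner_diff_right [simp]: "cinner x (y - z) = cinner x y - cinner x z"
  by (simp add: cinner_def right_diff_distrib sum_subtractf)

lemma cinner_scale_left [simp]: "cinner (c *s x) y = cnj c * cinner x y"
  by (simp add: cinner_def sum_distrib_left mult.assoc)

lemma cinner_scale_right [simp]: "cinner x (c *s y) = c * cinner x y"
  by (simp add: cinner_def sum_distrib_left mult.left_commute)

lemma matrix_vector_mult_add [simp]: "(M::complex^'n^'m) *v (x + y) = M *v x + M *v y"
  by (simp add: matrix_vector_mult_def vec_eq_iff distrib_left sum.distrib)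

lemma matrix_vector_mult_scale [simp]: "(M::complex^'n^'m) *v (c *s y) = c *s (M *v y)"
  by (simp add: matrix_vector_mult_def vec_eq_iff sum_distrib_left mult.left_commute)

lemma Re_cinner: "Re (cinner x y) = inner x y"
  by (simp add: cinner_def inner_vec_def inner_complex_def)

lemma cinner_self: "cinner x x = complex_of_real ((norm x)\<^sup>2)"
proof -
  have "Im (cinner x x) = 0"
    by (simp add: cinner_def)
  then show ?thesis
    by (simp add: complex_eq_iff Re_cinner power2_norm_eq_inner)
qed

lemma cinner_cadj: "cinner x (cadj M *v y) = cinner (M *v x) y"
proof -
  have "cinner (M *v x) y = (\<Sum>i\<in>UNIV. \<Sum>j\<in>UNIV. cnj (M$i$j) * cnj (x$j) * y$i)"
    by (simp add: cinner_def matrix_vector_mult_def sum_distrib_right)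
  also have "\<dots> = (\<Sum>j\<in>UNIV. \<Sum>i\<in>UNIV. cnj (M$i$j) * cnj (x$j) * y$i)"
    by (rule sum.swap)
  also have "\<dots> = cinner x (cadj M *v y)"
    by (simp add: cinner_def cadj_def matrix_vector_mult_def sum_distrib_left mult_ac)
  finally show ?thesis by simp
qed

lemma cinner_hermitian: "hermitian M \<Longrightarrow> cinner x (M *v y) = cinner (M *v x) y"
  by (metis cinner_cadj hermitian_def)

lemma scaleR_conv_vector_scalar_mult: "(r *\<^sub>R x :: complex^'n) = complex_of_real r *s x"
proof -
  have "\<And>z::complex. r *\<^sub>R z = complex_of_real r * z"
    by (simp add: scaleR_conv_of_real)
  then show ?thesis
    by (simp add: vec_eq_iff)
qed

definition csubspace :: "(complex^'n) set \<Rightarrow> bool" where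
  "csubspace W \<longleftrightarrow> (\<forall>x\<in>W. \<forall>c. c *s x \<in> W) \<and> (\<forall>x\<in>W. \<forall>y\<in>W. x + y \<in> W)"

lemma rayleigh_max_exists:
  fixes M :: "complex^'n^'n"
  assumes W: "csubspace W" "closed W" and w: "w \<in> W" "w \<noteq> 0"
  obtains v where "v \<in> W" "norm v = 1"
    "\<And>x. x \<in> W \<Longrightarrow> Re (cinner x (M *v x)) \<le> Re (cinner v (M *v v)) * (norm x)\<^sup>2"
proof -
  define f where "f x = Re (cinner x (M *v x))" for x
  have f_scale: "f (r *\<^sub>R x) = r\<^sup>2 * f x" for r x
    by (simp add: f_def scaleR_conv_vector_scalar_mult power2_eq_square)
  have normalize: "(1 / norm x) *\<^sub>R x \<in> W \<inter> sphere 0 1" if "x \<in> W" "x \<noteq> 0" for x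
  proof -
    have "(1 / norm x) *\<^sub>R x \<in> W"
      using W(1) that(1) unfolding csubspace_def scaleR_conv_vector_scalar_mult by blast
    then show ?thesis
      using that(2) by simp
  qed
  have "compact (W \<inter> sphere 0 1)"
    using W(2) by (metis Int_commute compact_Int_closed compact_sphere)
  moreover have "continuous_on (W \<inter> sphere 0 1) f"
    unfolding f_def cinner_def matrix_vector_mult_def by (intro continuous_intros)
  moreover have "W \<inter> sphere 0 1 \<noteq> {}"
    using normalize[OF w] by blast
  ultimately obtain v where v: "v \<in> W \<inter> sphere 0 1"
    and v_max: "\<And>y. y \<in> W \<inter> sphere 0 1 \<Longrightarrow> f y \<le> f v"
    using continuous_attains_sup by metis
  have "f x \<le> f v * (norm x)\<^sup>2" if x: "x \<in> W" for x
  proof (cases "x = 0")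
    case True
    then show ?thesis by (simp add: f_def cinner_def)
  next
    case False
    then have "(1 / norm x)\<^sup>2 * f x \<le> f v"
      using v_max[OF normalize[OF x False]] by (simp add: f_scale)
    then show ?thesis
      using False by (simp add: field_simps)
  qed
  with v that show ?thesis
    unfolding f_def by auto
qed

lemma linear_coeff_zero_if_quadratic_nonpos:
  fixes a b :: real
  assumes "\<And>s. 2 * s * a + s\<^sup>2 * b \<le> 0"
  shows "a = 0"
proof (rule ccontr)
  assume "a \<noteq> 0"
  define e where "e = 1 / (\<bar>b\<bar> + 1)"
  have e: "e > 0" "e * \<bar>b\<bar> < 1"
    unfolding e_def by (auto simp: field_simps)
  have "(e * a\<^sup>2) * (2 + e * b) \<le> 0"
    using assms[of "e * a"] by (simp add: power2_eq_square algebra_simps)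
  moreover have "e * a\<^sup>2 > 0"
    using \<open>a \<noteq> 0\<close> e by simp
  moreover have "e * (- \<bar>b\<bar>) \<le> e * b"
    using e(1) by (intro mult_left_mono) auto
  then have "2 + e * b > 0"
    using e(2) by simp
  ultimately show False
    using mult_pos_pos[of "e * a\<^sup>2" "2 + e * b"] by linarith
qed

text \<open>First variation of the Rayleigh quotient at a maximiser \<open>v\<close>: the perturbation
  \<open>v + s u\<close> with \<open>u \<bottom> v\<close> changes the quotient by \<open>2 s Re\<langle>u, M v\<rangle> + O(s\<^sup>2)\<close>.\<close>
lemma rayleigh_max_orthogonal:
  fixes M :: "complex^'n^'n"
  assumes herm: "hermitian M" and W: "csubspace W"
    and v: "v \<in> W" "norm v = 1"
    and v_max: "\<And>x. x \<in> W \<Longrightarrow> Re (cinner x (M *v x)) \<le> Re (cinner v (M *v v)) * (norm x)\<^sup>2"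
    and u: "u \<in> W" "cinner v u = 0"
  shows "cinner u (M *v v) = 0"
proof -
  have Re_zero: "Re (cinner u (M *v v)) = 0" if u: "u \<in> W" "cinner v u = 0" for u
  proof (rule linear_coeff_zero_if_quadratic_nonpos)
    fix s :: real
    define x where "x = v + complex_of_real s *s u"
    have "x \<in> W"
      using W u v unfolding x_def csubspace_def by blast
    have "cinner u v = 0"
      using u cinner_commute[of u v] by simp
    have "cinner v (M *v u) = cnj (cinner u (M *v v))"
      using cinner_hermitian[OF herm] cinner_commute by metis
    moreover have "cinner x (M *v x) = cinner v (M *v v)
        + complex_of_real s * (cinner v (M *v u) + cinner u (M *v v))
        + complex_of_real (s\<^sup>2) * cinner u (M *v u)"
      by (simp add: x_def distrib_left power2_eq_square mult.assoc)
    ultimately have "Re (cinner x (M *v x))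
        = Re (cinner v (M *v v)) + 2 * s * Re (cinner u (M *v v)) + s\<^sup>2 * Re (cinner u (M *v u))"
      by simp
    moreover have "cinner x x = cinner v v
        + complex_of_real s * (cinner v u + cinner u v) + complex_of_real (s\<^sup>2) * cinner u u"
      by (simp add: x_def distrib_left power2_eq_square mult.assoc)
    then have "complex_of_real ((norm x)\<^sup>2) = complex_of_real (1 + s\<^sup>2 * (norm u)\<^sup>2)"
      using u(2) \<open>cinner u v = 0\<close> v(2) by (simp add: cinner_self)
    then have "(norm x)\<^sup>2 = 1 + s\<^sup>2 * (norm u)\<^sup>2"
      by (simp only: of_real_eq_iff)
    ultimately show "2 * s * Re (cinner u (M *v v))
        + s\<^sup>2 * (Re (cinner u (M *v u)) - Re (cinner v (M *v v)) * (norm u)\<^sup>2) \<le> 0"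
      using v_max[OF \<open>x \<in> W\<close>] by (simp add: algebra_simps)
  qed
  have "\<i> *s u \<in> W"
    using W u unfolding csubspace_def by blast
  then have "Im (cinner u (M *v v)) = 0"
    using Re_zero[of "\<i> *s u"] u by simp
  with Re_zero[OF u] show ?thesis
    by (simp add: complex_eq_iff)
qed

lemma rayleigh_max_eigenvector:
  fixes M :: "complex^'n^'n"
  assumes herm: "hermitian M" and W: "csubspace W" and invariant: "\<And>x. x \<in> W \<Longrightarrow> M *v x \<in> W"
    and v: "v \<in> W" "norm v = 1"
    and v_max: "\<And>x. x \<in> W \<Longrightarrow> Re (cinner x (M *v x)) \<le> Re (cinner v (M *v v)) * (norm x)\<^sup>2"
  shows "M *v v = complex_of_real (Re (cinner v (M *v v))) *s v"
proof -
  define \<mu> where "\<mu> = cinner v (M *v v)"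
  have "\<mu> = cnj \<mu>"
    unfolding \<mu>_def using cinner_hermitian[OF herm] cinner_commute by metis
  then have \<mu>_real: "\<mu> = complex_of_real (Re \<mu>)"
    by (simp add: complex_eq_iff)
  define z where "z = M *v v - \<mu> *s v"
  have "z = M *v v + (- \<mu>) *s v"
    by (simp add: z_def vec_eq_iff)
  then have "z \<in> W"
    using W invariant v unfolding csubspace_def by metis
  have vv: "cinner v v = 1"
    using v(2) by (simp add: cinner_self)
  have "cinner v z = 0"
    by (simp add: z_def \<mu>_def vv)
  then have "cinner z z = 0"
    using rayleigh_max_orthogonal[OF herm W v v_max \<open>z \<in> W\<close>] cinner_commute[of z v]
    by (simp add: z_def)
  then have "z = 0"
    by (simp add: cinner_self)
  then show ?thesis
    using \<mu>_real by (simp add: z_def \<mu>_def)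
qed

lemma cinner_orthogonal_exists:
  fixes u :: "'i \<Rightarrow> complex^'n"
  assumes "finite S" "card S < CARD('n)"
  obtains w where "w \<noteq> 0" "\<And>j. j \<in> S \<Longrightarrow> cinner (u j) w = 0"
proof -
  define B where "B = u ` S \<union> (\<lambda>j. \<i> *s u j) ` S"
  have "card B \<le> card (u ` S) + card ((\<lambda>j. \<i> *s u j) ` S)"
    unfolding B_def by (rule card_Un_le)
  also have "\<dots> \<le> card S + card S"
    by (intro add_mono card_image_le assms(1))
  finally have "dim B < DIM(complex^'n)"
    using dim_le_card'[of B] assms by (simp add: B_def)
  then obtain w where "w \<noteq> 0" and w_orth: "\<And>y. y \<in> span B \<Longrightarrow> orthogonal w y"
    by (rule orthogonal_to_subspace_exists) blast+
  moreover have "cinner (u j) w = 0" if "j \<in> S" for j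
  proof -
    have "orthogonal w (u j)" "orthogonal w (\<i> *s u j)"
      using w_orth that by (auto simp: B_def intro: span_base)
    then have "Re (cinner (u j) w) = 0" "Re (cinner (\<i> *s u j) w) = 0"
      by (metis Re_cinner inner_commute orthogonal_def)+
    then show ?thesis
      by (simp add: complex_eq_iff)
  qed
  ultimately show ?thesis
    using that by blast
qed

lemma hermitian_orthonormal_eigenvectors:
  fixes M :: "complex^'n^'n" and S :: "'n set"
  assumes herm: "hermitian M"
  shows "\<exists>u lam. (\<forall>i\<in>S. \<forall>j\<in>S. cinner (u i) (u j) = (if i = j then 1 else 0)) \<and>
     (\<forall>i\<in>S. M *v u i = complex_of_real (lam i) *s u i)"
proof (induction S rule: infinite_finite_induct)
  case (infinite S)
  then show ?case by simp
next
  case empty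
  then show ?case by simp
next
  case (insert k S)
  then obtain u lam where orth: "\<forall>i\<in>S. \<forall>j\<in>S. cinner (u i) (u j) = (if i = j then 1 else 0)"
    and eig: "\<forall>i\<in>S. M *v u i = complex_of_real (lam i) *s u i"
    by blast
  define W where "W = {w. \<forall>j\<in>S. cinner (u j) w = 0}"
  have W: "csubspace W"
    by (simp add: W_def csubspace_def)
  have invariant: "M *v x \<in> W" if "x \<in> W" for x
  proof -
    have "cinner (u j) (M *v x) = 0" if "j \<in> S" for j
      using cinner_hermitian[OF herm, of "u j" x] eig that \<open>x \<in> W\<close> by (simp add: W_def)
    then show ?thesis
      by (simp add: W_def)
  qed
  have "W = (\<Inter>j\<in>S. {w. cinner (u j) w = 0})"
    by (auto simp: W_def)
  then have "closed W"
    unfolding cinner_def by (auto intro!: closed_INT closed_Collect_eq continuous_intros)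
  have "card S < CARD('n)"
    using insert(2) by (intro psubset_card_mono) auto
  then obtain w where "w \<noteq> 0" "\<And>j. j \<in> S \<Longrightarrow> cinner (u j) w = 0"
    using cinner_orthogonal_exists[OF insert(1), where u = u] by blast
  then have "w \<in> W" "w \<noteq> 0"
    by (simp_all add: W_def)
  then obtain v where v: "v \<in> W" "norm v = 1"
    and v_max: "\<And>x. x \<in> W \<Longrightarrow> Re (cinner x (M *v x)) \<le> Re (cinner v (M *v v)) * (norm x)\<^sup>2"
    using rayleigh_max_exists[OF W \<open>closed W\<close>, where M = M] by blast
  have "cinner v v = 1"
    using v(2) by (simp add: cinner_self)
  moreover have "cinner (u j) v = 0" "cinner v (u j) = 0" if "j \<in> S" for j
    using v(1) that cinner_commute[of v "u j"] unfolding W_def by auto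
  ultimately have "cinner ((u(k := v)) i) ((u(k := v)) j) = (if i = j then 1 else 0)"
    if "i \<in> insert k S" "j \<in> insert k S" for i j
    using that orth insert(2) by (cases "i = k"; cases "j = k") simp_all
  moreover have "M *v (u(k := v)) i
      = complex_of_real ((lam(k := Re (cinner v (M *v v)))) i) *s (u(k := v)) i"
    if "i \<in> insert k S" for i
    using that eig insert(2) rayleigh_max_eigenvector[OF herm W invariant v v_max]
    by (cases "i = k") simp_all
  ultimately show ?case
    by blast
qed

lemma hermitian_unitary_rdiag:
  fixes M :: "complex^'n^'n"
  assumes "hermitian M"
  obtains U lam where "unitary U" "M = U ** rdiag lam ** cadj U"
    "\<And>i. \<exists>x. cinner x x = 1 \<and> M *v x = complex_of_real (lam i) *s x"
proof -
  obtain u :: "'n \<Rightarrow> complex^'n" and lam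
    where orth: "\<And>i j. cinner (u i) (u j) = (if i = j then 1 else 0)"
      and eig: "\<And>i. M *v u i = complex_of_real (lam i) *s u i"
    using hermitian_orthonormal_eigenvectors[OF assms, of UNIV] by blast
  define U :: "complex^'n^'n" where "U = (\<chi> r c. u c $ r)"
  have "cadj U ** U = mat 1"
    using orth by (simp add: U_def cadj_def matrix_matrix_mult_def mat_def vec_eq_iff cinner_def)
  then have "unitary U"
    by (simp add: unitary_def)
  have "(M ** U) $ r $ c = (U ** rdiag lam) $ r $ c" for r c
  proof -
    have "(M ** U) $ r $ c = (M *v u c) $ r"
      by (simp add: U_def matrix_matrix_mult_def matrix_vector_mult_def)
    then show ?thesis
      by (simp add: eig U_def rdiag_mult_right mult.commute)
  qed
  then have "M ** U = U ** rdiag lam"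
    by (simp add: vec_eq_iff)
  then have "M = U ** rdiag lam ** cadj U"
    by (metis matrix_mul_right_inverse_cancel unitary_mult_cadj \<open>unitary U\<close>)
  moreover have "\<exists>x. cinner x x = 1 \<and> M *v x = complex_of_real (lam i) *s x" for i
    using orth[of i i] eig[of i] by (intro exI[of _ "u i"]) simp
  ultimately show ?thesis
    using that \<open>unitary U\<close> by blast
qed

lemma posdef_unitary_rdiag:
  assumes "posdef M"
  obtains U d where "unitary U" "\<And>i. 0 < d i" "M = U ** rdiag d ** cadj U"
proof -
  obtain U d where "unitary U" "M = U ** rdiag d ** cadj U"
    and eig: "\<And>i. \<exists>x. cinner x x = 1 \<and> M *v x = complex_of_real (d i) *s x"
    using hermitian_unitary_rdiag[of M] assms unfolding posdef_def by blast
  moreover have "0 < d i" for i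
  proof -
    obtain x where "cinner x x = 1" "M *v x = complex_of_real (d i) *s x"
      using eig by blast
    moreover have "x \<noteq> 0"
      using \<open>cinner x x = 1\<close> by (auto simp: cinner_def)
    then have "0 < Re (cinner x (M *v x))"
      using assms unfolding posdef_def cinner_def by blast
    ultimately show ?thesis
      by simp
  qed
  ultimately show ?thesis
    using that by blast
qed

lemma posdef_cadj_mult:
  fixes B :: "complex^'m^'m" and T :: "complex^'n^'m"
  assumes B: "posdef B" and inverse: "S ** T = mat 1"
  shows "posdef (cadj T ** B ** T)"
  unfolding posdef_def
proof (intro conjI allI impI)
  show "hermitian (cadj T ** B ** T)"
    using B by (simp add: posdef_def hermitian_def cadj_mult matrix_mul_assoc)
next
  fix x :: "complex^'n"
  assume "x \<noteq> 0"
  have "S *v (T *v x) = x"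
    by (simp add: matrix_vector_mul_assoc inverse)
  then have "T *v x \<noteq> 0"
    using \<open>x \<noteq> 0\<close> by auto
  then have "0 < Re (cinner (T *v x) (B *v (T *v x)))"
    using B unfolding posdef_def cinner_def by blast
  also have "cinner (T *v x) (B *v (T *v x)) = cinner x ((cadj T ** B ** T) *v x)"
    by (simp add: cinner_cadj flip: matrix_vector_mul_assoc)
  finally show "0 < Re (\<Sum>i\<in>UNIV. cnj (x $ i) * ((cadj T ** B ** T) *v x) $ i)"
    by (simp add: cinner_def)
qed

lemma mpowr_unitary_rdiag:
  assumes U: "unitary U" and d: "\<And>i. 0 < d i" and M: "M = U ** rdiag d ** cadj U"
  shows "mpowr M t = U ** rdiag (\<lambda>i. d i powr t) ** cadj U"
proof -
  have "\<exists>U' d'. unitary U' \<and> (\<forall>i. 0 < d' i) \<and> M = U' ** rdiag d' ** cadj U' \<and>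
      mpowr M t = U' ** rdiag (\<lambda>i. d' i powr t) ** cadj U'"
    unfolding mpowr_def by (rule someI[of _ "U ** rdiag (\<lambda>i. d i powr t) ** cadj U"]) (use assms in blast)
  then obtain U' d' where U': "unitary U'" and "M = U' ** rdiag d' ** cadj U'"
    and "mpowr M t = U' ** rdiag (\<lambda>i. d' i powr t) ** cadj U'"
    by blast
  with U M show ?thesis
    using unitary_rdiag_eq_map[OF U' U, of d' d "\<lambda>x. x powr t"] by simp
qed

lemma mpowr_add:
  assumes "posdef M"
  shows "mpowr M p ** mpowr M q = mpowr M (p + q)"
proof -
  obtain U d where U: "unitary U" and d: "\<And>i. 0 < d i" and M: "M = U ** rdiag d ** cadj U"
    using posdef_unitary_rdiag[OF assms] by blast
  have "(\<lambda>i. d i powr p * d i powr q) = (\<lambda>i. d i powr (p + q))"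
    by (simp add: powr_add)
  then show ?thesis
    by (simp add: mpowr_unitary_rdiag[OF U d M] unitary_rdiag_mult[OF U])
qed

lemma mpowr_zero:
  assumes "posdef M"
  shows "mpowr M 0 = mat 1"
proof -
  obtain U d where U: "unitary U" and d: "\<And>i. 0 < d i" and M: "M = U ** rdiag d ** cadj U"
    using posdef_unitary_rdiag[OF assms] by blast
  have "(\<lambda>i. d i powr 0) = (\<lambda>_. 1)"
    using d by (simp add: less_imp_neq[symmetric])
  then show ?thesis
    by (simp add: mpowr_unitary_rdiag[OF U d M] rdiag_one unitary_mult_cadj[OF U])
qed

lemma mpowr_one:
  assumes "posdef M"
  shows "mpowr M 1 = M"
proof -
  obtain U d where U: "unitary U" and d: "\<And>i. 0 < d i" and M: "M = U ** rdiag d ** cadj U"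
    using posdef_unitary_rdiag[OF assms] by blast
  have "(\<lambda>i. d i powr 1) = d"
    using d by (simp add: fun_eq_iff less_imp_le)
  then show ?thesis
    unfolding mpowr_unitary_rdiag[OF U d M] using M by simp
qed

lemma cadj_mpowr:
  assumes "posdef M"
  shows "cadj (mpowr M p) = mpowr M p"
proof -
  obtain U d where U: "unitary U" and d: "\<And>i. 0 < d i" and M: "M = U ** rdiag d ** cadj U"
    using posdef_unitary_rdiag[OF assms] by blast
  show ?thesis
    by (simp add: mpowr_unitary_rdiag[OF U d M] cadj_unitary_conj)
qed

lemma gmean_unitary_rdiag:
  assumes A: "posdef A" and B: "posdef B"
  obtains V c where "unitary V" "\<And>i. 0 < c i"
    "B = mpowr A (1/2) ** (V ** rdiag c ** cadj V) ** mpowr A (1/2)"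
    "gmean A t B = mpowr A (1/2) ** (V ** rdiag (\<lambda>i. c i powr t) ** cadj V) ** mpowr A (1/2)"
proof -
  let ?S = "mpowr A (1/2)" and ?T = "mpowr A (-1/2)"
  have ST: "?S ** ?T = mat 1" and TS: "?T ** ?S = mat 1"
    using mpowr_add[OF A] mpowr_zero[OF A] by simp_all
  have "posdef (?T ** B ** ?T)"
    using posdef_cadj_mult[OF B ST] cadj_mpowr[OF A] by simp
  then obtain V c where V: "unitary V" "\<And>i. 0 < c i"
    and C: "?T ** B ** ?T = V ** rdiag c ** cadj V"
    using posdef_unitary_rdiag by blast
  have "B = (?S ** ?T) ** B ** (?T ** ?S)"
    unfolding ST TS by simp
  also have "\<dots> = ?S ** (?T ** B ** ?T) ** ?S"
    by (simp add: matrix_mul_assoc)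
  finally have "B = ?S ** (V ** rdiag c ** cadj V) ** ?S"
    unfolding C .
  moreover have "gmean A t B = ?S ** (V ** rdiag (\<lambda>i. c i powr t) ** cadj V) ** ?S"
    unfolding gmean_def using mpowr_unitary_rdiag[OF V C] by simp
  ultimately show ?thesis
    using that V by blast
qed

lemma Re_trace_cadj_rdiag:
  fixes Y :: "complex^'k^'d"
  shows "Re (trace (cadj Y ** rdiag f ** Y)) = (\<Sum>i\<in>UNIV. f i * (\<Sum>j\<in>UNIV. (cmod (Y $ i $ j))\<^sup>2))"
proof -
  have "trace (cadj Y ** rdiag f ** Y)
      = (\<Sum>j\<in>UNIV. \<Sum>i\<in>UNIV. complex_of_real (f i) * (Y $ i $ j * cnj (Y $ i $ j)))"
  proof -
    have "(cadj Y ** rdiag f ** Y) $ j $ j = (\<Sum>i\<in>UNIV. (cadj Y ** rdiag f) $ j $ i * Y $ i $ j)" for j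
      by (simp add: matrix_matrix_mult_def)
    then show ?thesis
      by (simp add: trace_def rdiag_mult_right cadj_def mult_ac)
  qed
  also have "\<dots> = complex_of_real (\<Sum>i\<in>UNIV. f i * (\<Sum>j\<in>UNIV. (cmod (Y $ i $ j))\<^sup>2))"
    by (subst sum.swap) (simp add: sum_distrib_left complex_norm_square[symmetric])
  finally show ?thesis
    by simp
qed

lemma Holder_sum_powr:
  fixes w c :: "'a \<Rightarrow> real"
  assumes I: "finite I" and w: "\<And>i. i \<in> I \<Longrightarrow> 0 \<le> w i" and c: "\<And>i. i \<in> I \<Longrightarrow> 0 < c i"
    and t: "0 \<le> t" "t \<le> 1"
  shows "(\<Sum>i\<in>I. c i powr t * w i) \<le> (\<Sum>i\<in>I. w i) powr (1 - t) * (\<Sum>i\<in>I. c i * w i) powr t"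
proof (cases "\<forall>i\<in>I. w i = 0")
  case True
  then show ?thesis by simp
next
  case False
  define P where "P = (\<Sum>i\<in>I. w i)"
  define Q where "Q = (\<Sum>i\<in>I. c i * w i)"
  define R where "R = Q / P"
  obtain k where "k \<in> I" "0 < w k"
    using False w by force
  have "0 < P"
    unfolding P_def using I \<open>k \<in> I\<close> \<open>0 < w k\<close> w by (rule sum_pos2)
  have "0 < Q"
    unfolding Q_def using c w \<open>k \<in> I\<close> \<open>0 < w k\<close>
    by (intro sum_pos2[OF I \<open>k \<in> I\<close>]) (auto simp: less_imp_le)
  with \<open>0 < P\<close> have "0 < R"
    by (simp add: R_def)
  \<comment> \<open>concavity of \<open>x powr t\<close>: its graph lies below the tangent at \<open>R = Q / P\<close>\<close>
  have tangent: "c i powr t * w i \<le> R powr t * (1 - t) * w i + R powr t * t / R * (c i * w i)" if "i \<in> I" for i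
  proof -
    have "(c i / R) powr t \<le> (1 - t) + t * (c i / R)"
      using Youngs_inequality_0[of "1 - t" t 1 "c i / R"] t c[OF that] \<open>0 < R\<close> by simp
    then have "R powr t * (c i / R) powr t \<le> R powr t * ((1 - t) + t * (c i / R))"
      by (simp add: mult_left_mono)
    moreover have "R powr t * (c i / R) powr t = c i powr t"
      using \<open>0 < R\<close> c[OF that] by (simp add: powr_mult[symmetric])
    ultimately have "c i powr t * w i \<le> R powr t * ((1 - t) + t * (c i / R)) * w i"
      using w[OF that] by (simp add: mult_right_mono)
    then show ?thesis
      by (simp add: algebra_simps)
  qed
  have "(\<Sum>i\<in>I. c i powr t * w i) \<le> (\<Sum>i\<in>I. R powr t * (1 - t) * w i + R powr t * t / R * (c i * w i))"
    using tangent by (rule sum_mono)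
  also have "\<dots> = R powr t * (1 - t) * P + R powr t * t / R * Q"
    by (simp add: P_def Q_def sum_distrib_left sum.distrib)
  also have "\<dots> = P powr (1 - t) * Q powr t"
    using \<open>0 < P\<close> \<open>0 < Q\<close> by (simp add: R_def powr_divide powr_diff field_simps)
  finally show ?thesis
    unfolding P_def Q_def .
qed

lemma cadj_congruence_unitary_rdiag:
  assumes "cadj S = S"
  shows "cadj X ** (S ** (V ** D ** cadj V) ** S) ** X = cadj (cadj V ** S ** X) ** D ** (cadj V ** S ** X)"
  using assms by (simp add: cadj_mult matrix_mul_assoc)

theorem corollary5:
  fixes A B :: "complex^'d^'d" and X :: "complex^'k^'d" and t :: real
  assumes "posdef A" and "posdef B"
    and "rank X = CARD('k)"
    and "0 \<le> t" and "t \<le> 1"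
  shows "Re (trace (cadj X ** gmean A t B ** X))
           \<le> Re (trace (cadj X ** A ** X)) powr (1 - t) * Re (trace (cadj X ** B ** X)) powr t"
proof -
  define S where "S = mpowr A (1/2)"
  obtain V c where V: "unitary V" and c: "\<And>i. 0 < c i"
    and B: "B = S ** (V ** rdiag c ** cadj V) ** S"
    and G: "gmean A t B = S ** (V ** rdiag (\<lambda>i. c i powr t) ** cadj V) ** S"
    unfolding S_def using gmean_unitary_rdiag[OF assms(1,2)] by blast
  have "cadj S = S"
    unfolding S_def using cadj_mpowr[OF assms(1)] .
  have "A = S ** (V ** rdiag (\<lambda>_. 1) ** cadj V) ** S"
    using mpowr_add[OF assms(1), of "1/2" "1/2"] mpowr_one[OF assms(1)]
    by (simp add: S_def rdiag_one unitary_mult_cadj[OF V])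
  define Y where "Y = cadj V ** S ** X"
  have "cadj X ** A ** X = cadj Y ** rdiag (\<lambda>_. 1) ** Y"
    "cadj X ** B ** X = cadj Y ** rdiag c ** Y"
    "cadj X ** gmean A t B ** X = cadj Y ** rdiag (\<lambda>i. c i powr t) ** Y"
    unfolding Y_def G
    by (simp_all only: \<open>A = _\<close> B cadj_congruence_unitary_rdiag[OF \<open>cadj S = S\<close>])
  moreover define w where "w i = (\<Sum>j\<in>UNIV. (cmod (Y $ i $ j))\<^sup>2)" for i
  ultimately show ?thesis
    using Holder_sum_powr[of UNIV w c t] c assms(4,5)
    by (simp add: Re_trace_cadj_rdiag w_def sum_nonneg)
qed

end
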